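(* Let $\mathscr{A}$ be a finite alphabet, $\Xi\subseteq\mathscr{A}^{\mathbb{Z}}$ a subshift and $(\mathscr{G}_k)_{k\in\mathbb{N}}$ its GAP-graphs. (i) If $\Xi$ contains no periodic element, then for each $m\in\mathbb{N}$ there is $k_0\in\mathbb{N}$ such that for all $k\geq k_0$ the graph $\mathscr{G}_k$ has no closed path of length smaller than or equal to $m$; in particular the graphs $\mathscr{G}_k$ are simple for all sufficiently large $k$. (ii) If $\Xi$ contains an element $\eta$ of period $m$, then every $\mathscr{G}_k$ has a closed path of length $m$. (iii) If $\Xi=\mathrm{Orb}(\eta)$ where $\eta$ is periodic with period $m$, then $\mathscr{G}_k$ has no branching vertex for $k\geq m-1$.
   Context: $\mathscr{A}^{\mathbb{Z}}$ has the product topology and shift $(T\xi)(j)=\xi(j-1)$; a subshift is a non-empty closed $T$-invariant subset. $\eta$ is periodic if $T^n\eta=\eta$ for some $n\geq1$, and its period is the least such $n$; $\mathrm{Orb}(\eta)=\{T^n\eta:n\in\mathbb{Z}\}$. $\mathcal{D}(\Xi)$ is the set of finite subwords of elements of $\Xi$. The GAP-graph $\mathscr{G}_k$ has vertex set $\mathcal{D}(\Xi)\cap\mathscr{A}^k$, edge set $\mathcal{D}(\Xi)\cap\mathscr{A}^{k+1}$, edge $e=a_0\cdots a_k$ going from $\partial_0e=a_0\cdots a_{k-1}$ to $\partial_1e=a_1\cdots a_k$. A closed path of length $m$ is $(e_1,\dots,e_m)$ with $\partial_1e_i=\partial_0e_{i+1}$ and $\partial_1e_m=\partial_0e_1$.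 A graph is simple if no edge has equal origin and end and for any two vertices there is at most one edge from the first to the second. The degree of a vertex is its number of incoming plus outgoing edges; a vertex is dandling if it has only incoming or only outgoing edges; a vertex is branching if it is not dandling and has degree $>2$. *)

theory Defs
  imports "HOL-Analysis.Analysis"
begin

definition shift :: "(int \<Rightarrow> 'a) \<Rightarrow> (int \<Rightarrow> 'a)" where
  "shift \<xi> = (\<lambda>j. \<xi> (j - 1))"

definition config_top :: "(int \<Rightarrow> 'a) topology" where
  "config_top = product_topology (\<lambda>_. discrete_topology UNIV) UNIV"

definition subshift :: "(int \<Rightarrow> 'a) set \<Rightarrow> bool" where
  "subshift \<Xi> \<longleftrightarrow> \<Xi> \<noteq> {} \<and> closedin config_top \<Xi> \<and> shift ` \<Xi> = \<Xi>"

definition periodic :: "(int \<Rightarrow> 'a) \<Rightarrow> bool" where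
  "periodic \<eta> \<longleftrightarrow> (\<exists>n\<ge>1. (shift ^^ n) \<eta> = \<eta>)"

definition has_period :: "(int \<Rightarrow> 'a) \<Rightarrow> nat \<Rightarrow> bool" where
  "has_period \<eta> m \<longleftrightarrow> m \<ge> 1 \<and> (shift ^^ m) \<eta> = \<eta> \<and> (\<forall>n. 1 \<le> n \<and> n < m \<longrightarrow> (shift ^^ n) \<eta> \<noteq> \<eta>)"

definition orbit :: "(int \<Rightarrow> 'a) \<Rightarrow> (int \<Rightarrow> 'a) set" where
  "orbit \<eta> = {\<xi>. \<exists>n::int. \<xi> = (\<lambda>j. \<eta> (j - n))}"

definition subword :: "(int \<Rightarrow> 'a) \<Rightarrow> int \<Rightarrow> nat \<Rightarrow> 'a list" where
  "subword \<xi> i l = map (\<lambda>n. \<xi> (i + int n)) [0..<l]"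

definition language :: "(int \<Rightarrow> 'a) set \<Rightarrow> 'a list set" where
  "language \<Xi> = {w. \<exists>\<xi>\<in>\<Xi>. \<exists>i. w = subword \<xi> i (length w)}"

definition gap_vertices :: "(int \<Rightarrow> 'a) set \<Rightarrow> nat \<Rightarrow> 'a list set" where
  "gap_vertices \<Xi> k = {w \<in> language \<Xi>. length w = k}"

definition gap_edges :: "(int \<Rightarrow> 'a) set \<Rightarrow> nat \<Rightarrow> 'a list set" where
  "gap_edges \<Xi> k = {w \<in> language \<Xi>. length w = k + 1}"

definition src :: "'a list \<Rightarrow> 'a list" where "src e = butlast e"
definition tgt :: "'a list \<Rightarrow> 'a list" where "tgt e = tl e"

definition closed_path :: "(int \<Rightarrow> 'a) set \<Rightarrow> nat \<Rightarrow> 'a list list \<Rightarrow> bool" where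
  "closed_path \<Xi> k es \<longleftrightarrow> es \<noteq> [] \<and> set es \<subseteq> gap_edges \<Xi> k \<and>
     (\<forall>i. i + 1 < length es \<longrightarrow> tgt (es ! i) = src (es ! (i + 1))) \<and>
     tgt (last es) = src (hd es)"

definition gap_simple :: "(int \<Rightarrow> 'a) set \<Rightarrow> nat \<Rightarrow> bool" where
  "gap_simple \<Xi> k \<longleftrightarrow>
     (\<forall>e \<in> gap_edges \<Xi> k. src e \<noteq> tgt e) \<and>
     (\<forall>e \<in> gap_edges \<Xi> k. \<forall>e' \<in> gap_edges \<Xi> k. src e = src e' \<and> tgt e = tgt e' \<longrightarrow> e = e')"

definition in_edges :: "(int \<Rightarrow> 'a) set \<Rightarrow> nat \<Rightarrow> 'a list \<Rightarrow> 'a list set" where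
  "in_edges \<Xi> k v = {e \<in> gap_edges \<Xi> k. tgt e = v}"

definition out_edges :: "(int \<Rightarrow> 'a) set \<Rightarrow> nat \<Rightarrow> 'a list \<Rightarrow> 'a list set" where
  "out_edges \<Xi> k v = {e \<in> gap_edges \<Xi> k. src e = v}"

definition degree :: "(int \<Rightarrow> 'a) set \<Rightarrow> nat \<Rightarrow> 'a list \<Rightarrow> nat" where
  "degree \<Xi> k v = card (in_edges \<Xi> k v) + card (out_edges \<Xi> k v)"

definition dandling :: "(int \<Rightarrow> 'a) set \<Rightarrow> nat \<Rightarrow> 'a list \<Rightarrow> bool" where
  "dandling \<Xi> k v \<longleftrightarrow> in_edges \<Xi> k v = {} \<or> out_edges \<Xi> k v = {}"

definition branching :: "(int \<Rightarrow> 'a) set \<Rightarrow> nat \<Rightarrow> 'a list \<Rightarrow> bool" where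
  "branching \<Xi> k v \<longleftrightarrow> v \<in> gap_vertices \<Xi> k \<and> \<not> dandling \<Xi> k v \<and> degree \<Xi> k v > 2"

end

theory Submission
  imports Defs
begin

(* (i) A closed path of length p in the GAP-graph of order k is the same thing as a p-periodic
   configuration all of whose (k+1)-words are admissible.  For p <= m all these configurations are
   (m!)-periodic, and there are only finitely many of them; so if short closed paths exist for
   infinitely many k, a single periodic configuration has all of its words admissible and, the
   subshift being closed, belongs to it.  Simplicity is the case m = 1.
   (ii) The m successive (k+1)-words of an element of period m form a closed path.
   (iii) For minimal period m, while some word of length n has two right extensions the number of
   distinct n-words within one period grows strictly with n; there are at most m of them, so from
   n = m - 1 on extensions are unique, two occurrences of one word then differ by a period, and a
   word of length k >= m - 1 determines its position modulo m.  Hence every vertex has at most one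
   incoming and one outgoing edge. *)

lemma funpow_shift: "(shift ^^ n) \<xi> = (\<lambda>j. \<xi> (j - int n))"
  by (induction n) (auto simp: shift_def algebra_simps)

lemma length_subword [simp]: "length (subword \<xi> i l) = l"
  by (simp add: subword_def)

lemma nth_subword [simp]: "t < l \<Longrightarrow> subword \<xi> i l ! t = \<xi> (i + int t)"
  by (simp add: subword_def)

lemma subword_eq_iff:
  "subword \<xi> i l = subword \<zeta> i' l \<longleftrightarrow> (\<forall>t<l. \<xi> (i + int t) = \<zeta> (i' + int t))"
  by (simp add: list_eq_iff_nth_eq)

lemma take_subword: "n \<le> l \<Longrightarrow> take n (subword \<xi> i l) = subword \<xi> i n"
  by (simp add: list_eq_iff_nth_eq)

lemma tl_subword: "tl (subword \<xi> i (Suc n)) = subword \<xi> (i + 1) n"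
  by (simp add: list_eq_iff_nth_eq nth_tl algebra_simps)

lemma butlast_subword: "butlast (subword \<xi> i (Suc n)) = subword \<xi> i n"
  by (simp add: list_eq_iff_nth_eq nth_butlast)

lemma subword_Suc: "subword \<xi> i (Suc n) = subword \<xi> i n @ [\<xi> (i + int n)]"
  by (simp add: subword_def)

lemma subword_translate: "subword (\<lambda>j. \<xi> (j - n)) i l = subword \<xi> (i - n) l"
  by (simp add: list_eq_iff_nth_eq algebra_simps)

lemma subword_in_language: "\<xi> \<in> \<Xi> \<Longrightarrow> subword \<xi> i l \<in> language \<Xi>"
  unfolding language_def by auto

lemma language_take: "w \<in> language \<Xi> \<Longrightarrow> l \<le> length w \<Longrightarrow> take l w \<in> language \<Xi>"
  unfolding language_def by (auto simp: take_subword) (metis take_subword)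

definition is_period :: "(int \<Rightarrow> 'a) \<Rightarrow> nat \<Rightarrow> bool" where
  "is_period \<xi> p \<longleftrightarrow> (\<forall>j. \<xi> (j + int p) = \<xi> j)"

lemma funpow_shift_fixed_iff: "(shift ^^ p) \<xi> = \<xi> \<longleftrightarrow> is_period \<xi> p"
proof
  assume "(shift ^^ p) \<xi> = \<xi>"
  then have "\<xi> (j + int p - int p) = \<xi> (j + int p)" for j
    by (metis funpow_shift)
  then show "is_period \<xi> p" by (simp add: is_period_def)
next
  assume "is_period \<xi> p"
  then have "\<xi> (j - int p) = \<xi> j" for j
    by (metis is_period_def diff_add_cancel)
  then show "(shift ^^ p) \<xi> = \<xi>" by (simp add: funpow_shift)
qed

lemma periodic_iff_is_period: "periodic \<xi> \<longleftrightarrow> (\<exists>p\<ge>1. is_period \<xi> p)"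
  by (simp add: periodic_def funpow_shift_fixed_iff)

lemma has_period_iff_is_period:
  "has_period \<xi> m \<longleftrightarrow> m \<ge> 1 \<and> is_period \<xi> m \<and> (\<forall>n. 1 \<le> n \<and> n < m \<longrightarrow> \<not> is_period \<xi> n)"
  by (simp add: has_period_def funpow_shift_fixed_iff)

lemma is_period_add_mult:
  assumes "is_period \<xi> p"
  shows "\<xi> (j + c * int p) = \<xi> j"
proof -
  have nat_mult: "\<xi> (j + int n * int p) = \<xi> j" for n j
  proof (induction n arbitrary: j)
    case (Suc n)
    have "\<xi> (j + int (Suc n) * int p) = \<xi> ((j + int n * int p) + int p)"
      by (simp add: algebra_simps)
    also have "\<dots> = \<xi> j" using assms Suc by (simp add: is_period_def)
    finally show ?case .
  qed simp
  show ?thesis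
  proof (cases "c \<ge> 0")
    case True
    then show ?thesis using nat_mult[where n="nat c" and j=j] by simp
  next
    case False
    then show ?thesis using nat_mult[where n="nat (- c)" and j="j + c * int p"] by (simp add: algebra_simps)
  qed
qed

lemma is_period_dvd:
  assumes "is_period \<xi> p" "p dvd q"
  shows "is_period \<xi> q"
proof -
  obtain c where "q = p * c" using assms(2) ..
  then show ?thesis
    unfolding is_period_def using is_period_add_mult[OF assms(1), of _ "int c"]
    by (simp add: mult.commute)
qed

lemma is_period_mod:
  assumes "is_period \<xi> p"
  shows "\<xi> (j mod int p) = \<xi> j"
  using is_period_add_mult[OF assms, of "j mod int p" "j div int p"]
  by (simp add: mult.commute)

lemma is_period_cong:
  assumes "is_period \<xi> p" "a mod int p = b mod int p"
  shows "\<xi> a = \<xi> b"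
  using is_period_mod[OF assms(1), of a] is_period_mod[OF assms(1), of b] assms(2) by simp

lemma subword_cong:
  assumes "is_period \<xi> p" "i mod int p = i' mod int p"
  shows "subword \<xi> i l = subword \<xi> i' l"
  unfolding subword_eq_iff
proof (intro allI impI)
  fix t
  show "\<xi> (i + int t) = \<xi> (i' + int t)"
    using assms(1) by (rule is_period_cong) (rule mod_add_cong[OF assms(2) refl])
qed

lemma finite_is_period:
  assumes "p \<ge> 1"
  shows "finite {\<xi> :: int \<Rightarrow> 'a::finite. is_period \<xi> p}" (is "finite ?P")
proof (rule finite_imageD)
  show "inj_on (\<lambda>\<xi>. subword \<xi> 0 p) ?P"
  proof (rule inj_onI, rule ext)
    fix \<xi> \<zeta> j
    assume \<xi>: "\<xi> \<in> ?P" and \<zeta>: "\<zeta> \<in> ?P" and eq: "subword \<xi> 0 p = subword \<zeta> 0 p"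
    define t where "t = nat (j mod int p)"
    have t: "t < p" "int t = j mod int p"
      using assms by (auto simp: t_def nat_less_iff)
    then have "\<xi> (j mod int p) = \<zeta> (j mod int p)"
      using eq unfolding subword_eq_iff by (metis add_0)
    then show "\<xi> j = \<zeta> j"
      using \<xi> \<zeta> by (simp add: is_period_mod)
  qed
  show "finite ((\<lambda>\<xi>. subword \<xi> 0 p) ` ?P)"
    by (rule finite_subset[OF _ finite_lists_length_eq[of "UNIV::'a set" p]]) auto
qed

lemma subshift_funpow_shift_image:
  assumes "subshift \<Xi>"
  shows "(shift ^^ n) ` \<Xi> = \<Xi>"
proof (induction n)
  case (Suc n)
  have "(shift ^^ Suc n) ` \<Xi> = shift ` (shift ^^ n) ` \<Xi>"
    by (simp add: image_comp)
  with Suc assms show ?case by (simp add: subshift_def)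
qed simp

lemma subshift_translate:
  assumes "subshift \<Xi>" "\<xi> \<in> \<Xi>"
  shows "(\<lambda>j. \<xi> (j - n)) \<in> \<Xi>"
proof (cases "n \<ge> 0")
  case True
  then show ?thesis
    using subshift_funpow_shift_image[OF assms(1), of "nat n"] assms(2)
    by (force simp: funpow_shift)
next
  case False
  obtain \<zeta> where "\<zeta> \<in> \<Xi>" "\<xi> = (shift ^^ nat (- n)) \<zeta>"
    using subshift_funpow_shift_image[OF assms(1), of "nat (- n)"] assms(2) by blast
  moreover from this False have "(\<lambda>j. \<xi> (j - n)) = \<zeta>"
    by (simp add: funpow_shift)
  ultimately show ?thesis by simp
qed

lemma subshift_memI:
  assumes "subshift \<Xi>" and words: "\<And>i l. subword \<zeta> i l \<in> language \<Xi>"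
  shows "\<zeta> \<in> \<Xi>"
proof (rule ccontr)
  assume "\<zeta> \<notin> \<Xi>"
  have "openin config_top (UNIV - \<Xi>)"
    using assms(1) by (simp add: subshift_def closedin_def config_top_def)
  \<comment> \<open>A basic neighbourhood of \<open>\<zeta>\<close> missing \<open>\<Xi>\<close> constrains only coordinates in \<open>[-N, N]\<close>,
    where a suitable translate of an element of \<open>\<Xi>\<close> agrees with \<open>\<zeta>\<close>.\<close>
  then obtain U where
      U: "finite {i \<in> UNIV. U i \<noteq> topspace (discrete_topology (UNIV :: 'a set))}"
        "\<zeta> \<in> Pi\<^sub>E UNIV U" "Pi\<^sub>E UNIV U \<subseteq> UNIV - \<Xi>"
    using \<open>\<zeta> \<notin> \<Xi>\<close> unfolding config_top_def openin_product_topology_alt by blast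
  define F where "F = {i. U i \<noteq> UNIV}"
  have "finite ((\<lambda>i. nat \<bar>i\<bar>) ` F)"
    using U(1) by (simp add: F_def)
  then obtain N where N: "\<And>i. i \<in> F \<Longrightarrow> nat \<bar>i\<bar> \<le> N"
    by (auto simp: finite_nat_set_iff_bounded_le)
  obtain \<xi> i0 where \<xi>: "\<xi> \<in> \<Xi>" "subword \<zeta> (- int N) (2 * N + 1) = subword \<xi> i0 (2 * N + 1)"
    using words[of "- int N" "2 * N + 1"] unfolding language_def by auto
  define \<xi>' where "\<xi>' = (\<lambda>j. \<xi> (j - (- int N - i0)))"
  have "\<xi>' \<in> \<Xi>"
    unfolding \<xi>'_def using subshift_translate[OF assms(1) \<xi>(1)] .
  moreover have "\<xi>' i \<in> U i" for i
  proof (cases "i \<in> F")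
    case True
    define t where "t = nat (i + int N)"
    have t: "t < 2 * N + 1" "int t = i + int N"
      using N[OF True] by (auto simp: t_def)
    then have "\<zeta> (- int N + int t) = \<xi> (i0 + int t)"
      using \<xi>(2) unfolding subword_eq_iff by blast
    then have "\<xi>' i = \<zeta> i"
      using t(2) by (simp add: \<xi>'_def algebra_simps)
    then show ?thesis using U(2) by (auto simp: PiE_iff)
  qed (simp add: F_def)
  then have "\<xi>' \<in> Pi\<^sub>E UNIV U"
    by (simp add: PiE_iff)
  ultimately show False using U(3) by blast
qed

lemma closed_path_overlap:
  assumes cp: "closed_path \<Xi> k es" and i: "i < length es" and t: "t < k"
  shows "es ! ((i + 1) mod length es) ! t = es ! i ! (t + 1)"
proof -
  have len: "length (es ! i) = k + 1" if "i < length es" for i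
    using cp that by (auto simp: closed_path_def gap_edges_def dest!: nth_mem)
  show ?thesis
  proof (cases "i + 1 < length es")
    case True
    then have "tl (es ! i) = butlast (es ! (i + 1))"
      using cp by (simp add: closed_path_def src_def tgt_def)
    then have "tl (es ! i) ! t = butlast (es ! (i + 1)) ! t" by simp
    then show ?thesis
      using True t len[of i] len[of "i + 1"] by (simp add: nth_butlast nth_tl)
  next
    case False
    with i have len_es: "length es = i + 1" by simp
    moreover have "tl (last es) = butlast (hd es)"
      using cp by (simp add: closed_path_def src_def tgt_def)
    moreover have "last es = es ! i" "hd es = es ! 0"
    proof -
      have "es \<noteq> []" using i by auto
      then show "last es = es ! i" "hd es = es ! 0"
        using len_es by (simp_all add: last_conv_nth hd_conv_nth)
    qed
    ultimately have "tl (es ! i) = butlast (es ! 0)"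
      by simp
    then have "tl (es ! i) ! t = butlast (es ! 0) ! t" by simp
    then show ?thesis
      using len_es t len[of i] len[of 0] by (simp add: nth_butlast nth_tl)
  qed
qed

lemma closed_path_periodic_config:
  assumes cp: "closed_path \<Xi> k es"
  shows "\<exists>\<zeta>. is_period \<zeta> (length es) \<and> (\<forall>i. subword \<zeta> i (k + 1) \<in> language \<Xi>)"
proof -
  define p where "p = length es"
  have p: "p > 0" using cp by (simp add: closed_path_def p_def)
  define E where "E j = es ! nat (j mod int p)" for j
  \<comment> \<open>Consecutive edges overlap, so the window of \<open>\<zeta>\<close> at \<open>j\<close> is the edge \<open>E j\<close>.\<close>
  define \<zeta> where "\<zeta> j = E j ! 0" for j
  have E: "E j \<in> language \<Xi>" "length (E j) = k + 1" for j
  proof -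
    have "E j \<in> set es" using p by (simp add: E_def p_def nat_less_iff)
    then show "E j \<in> language \<Xi>" "length (E j) = k + 1"
      using cp by (auto simp: closed_path_def gap_edges_def)
  qed
  have E_overlap: "E (j + 1) ! t = E j ! (t + 1)" if "t < k" for j t
  proof -
    define i where "i = nat (j mod int p)"
    have i: "i < p" "int i = j mod int p" using p by (auto simp: i_def nat_less_iff)
    then have "nat ((j + 1) mod int p) = (i + 1) mod p"
      by (metis mod_add_left_eq nat_int of_nat_1 of_nat_add zmod_int)
    then show ?thesis
      using closed_path_overlap[OF cp, of i t] i that by (simp add: E_def i_def p_def)
  qed
  have \<zeta>_E: "\<zeta> (j + int t) = E j ! t" if "t \<le> k" for j t
    using that
  proof (induction t arbitrary: j)
    case (Suc t)
    have "\<zeta> (j + int (Suc t)) = \<zeta> ((j + 1) + int t)" by (simp add: algebra_simps)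
    also have "\<dots> = E j ! Suc t" using Suc E_overlap[of t j] by simp
    finally show ?case .
  qed (simp add: \<zeta>_def)
  have "subword \<zeta> i (k + 1) = E i" for i
    using E(2) \<zeta>_E by (simp add: list_eq_iff_nth_eq)
  moreover have "is_period \<zeta> p"
    by (simp add: is_period_def \<zeta>_def E_def)
  ultimately show ?thesis using E(1) p_def by metis
qed

lemma subshift_periodic_limit:
  fixes \<Xi> :: "(int \<Rightarrow> 'a::finite) set"
  assumes sub: "subshift \<Xi>" and p: "p \<ge> 1" and K: "infinite K"
    and approx: "\<And>k. k \<in> K \<Longrightarrow> \<exists>\<zeta>. is_period \<zeta> p \<and> (\<forall>i. subword \<zeta> i k \<in> language \<Xi>)"
  shows "\<exists>\<eta>\<in>\<Xi>. periodic \<eta>"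
proof -
  define f where "f k = (SOME \<zeta>. is_period \<zeta> p \<and> (\<forall>i. subword \<zeta> i k \<in> language \<Xi>))" for k
  have f: "is_period (f k) p" "subword (f k) i k \<in> language \<Xi>" if "k \<in> K" for k i
    using someI_ex[OF approx[OF that]] unfolding f_def by simp_all
  have "f ` K \<subseteq> {\<zeta>. is_period \<zeta> p}"
    using f(1) by blast
  then have "finite (f ` K)"
    using finite_is_period[OF p] by (rule finite_subset)
  then obtain k0 where k0: "k0 \<in> K" "infinite {k \<in> K. f k = f k0}"
    using pigeonhole_infinite[OF K] by blast
  have "f k0 \<in> \<Xi>"
  proof (rule subshift_memI[OF sub])
    fix i l
    obtain k where k: "k \<in> K" "f k = f k0" "l \<le> k"
      using k0(2) unfolding infinite_nat_iff_unbounded_le by auto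
    then have "take l (subword (f k0) i k) \<in> language \<Xi>"
      using f(2)[of k i] by (intro language_take) simp_all
    with k(3) show "subword (f k0) i l \<in> language \<Xi>"
      by (simp add: take_subword)
  qed
  moreover have "periodic (f k0)"
    using f(1)[OF k0(1)] p by (auto simp: periodic_iff_is_period)
  ultimately show ?thesis by blast
qed

lemma eventually_no_short_closed_paths:
  fixes \<Xi> :: "(int \<Rightarrow> 'a::finite) set"
  assumes sub: "subshift \<Xi>" and aperiodic: "\<forall>\<eta>\<in>\<Xi>. \<not> periodic \<eta>"
  shows "\<exists>k0. \<forall>k\<ge>k0. \<not> (\<exists>es. closed_path \<Xi> k es \<and> length es \<le> m)"
proof (rule ccontr)
  define K where "K = {k. \<exists>es. closed_path \<Xi> k es \<and> length es \<le> m}"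
  assume "\<not> ?thesis"
  then have "infinite K"
    unfolding K_def infinite_nat_iff_unbounded_le by blast
  moreover have "\<exists>\<zeta>. is_period \<zeta> (fact m) \<and> (\<forall>i. subword \<zeta> i (Suc k) \<in> language \<Xi>)"
    if k: "k \<in> K" for k
  proof -
    obtain es where es: "closed_path \<Xi> k es" "length es \<le> m"
      using k unfolding K_def by blast
    obtain \<zeta> where "is_period \<zeta> (length es)" "\<forall>i. subword \<zeta> i (Suc k) \<in> language \<Xi>"
      using closed_path_periodic_config[OF es(1)] by auto
    moreover have "length es dvd fact m"
      using es by (intro dvd_fact) (auto simp: closed_path_def Suc_le_eq)
    ultimately show ?thesis
      by (blast intro: is_period_dvd)
  qed
  ultimately have "\<exists>\<eta>\<in>\<Xi>. periodic \<eta>"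
    by (intro subshift_periodic_limit[OF sub, of "fact m" "Suc ` K"]) (auto simp: finite_image_iff)
  with aperiodic show False by blast
qed

lemma gap_simple_if_no_loops:
  assumes "k \<ge> 1" and no_loop: "\<not> (\<exists>es. closed_path \<Xi> k es \<and> length es \<le> 1)"
  shows "gap_simple \<Xi> k"
proof -
  have "src e \<noteq> tgt e" if "e \<in> gap_edges \<Xi> k" for e
  proof
    assume "src e = tgt e"
    with that have "closed_path \<Xi> k [e]"
      by (simp add: closed_path_def)
    with no_loop show False by fastforce
  qed
  moreover have "e = src e @ [last (tgt e)]" if "e \<in> gap_edges \<Xi> k" for e
  proof -
    have "length e = k + 1" using that by (simp add: gap_edges_def)
    with assms(1) show ?thesis
      by (cases e rule: rev_cases) (auto simp: src_def tgt_def tl_append2 Suc_le_length_iff)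
  qed
  ultimately show ?thesis
    unfolding gap_simple_def by metis
qed

lemma closed_path_of_period:
  assumes "\<eta> \<in> \<Xi>" "is_period \<eta> m" "m \<ge> 1"
  shows "\<exists>es. closed_path \<Xi> k es \<and> length es = m"
proof -
  define es where "es = map (\<lambda>i. subword \<eta> (int i) (Suc k)) [0..<m]"
  have "closed_path \<Xi> k es"
    unfolding closed_path_def
  proof (intro conjI allI impI)
    show "es \<noteq> []" using assms(3) by (simp add: es_def)
    show "set es \<subseteq> gap_edges \<Xi> k"
      using assms(1) by (auto simp: es_def gap_edges_def subword_in_language)
    show "tgt (es ! i) = src (es ! (i + 1))" if "i + 1 < length es" for i
      using that by (simp add: es_def tgt_def src_def tl_subword butlast_subword add.commute)
    have "tgt (last es) = subword \<eta> (int m) k"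
      using assms(3) by (simp add: es_def last_map tgt_def tl_subword of_nat_diff)
    also have "\<dots> = subword \<eta> 0 k"
      using assms(2) by (simp add: subword_cong)
    also have "\<dots> = src (hd es)"
      using assms(3) by (simp add: es_def src_def butlast_subword hd_map)
    finally show "tgt (last es) = src (hd es)" .
  qed
  then show ?thesis by (auto simp: es_def)
qed

lemma is_period_of_agreement:
  assumes per: "is_period \<eta> m" and m: "m \<ge> 1"
    and agree: "\<And>s. \<eta> (a + int s) = \<eta> (b + int s)"
  shows "is_period \<eta> (nat ((b - a) mod int m))"
  unfolding is_period_def
proof
  fix j
  define s where "s = nat ((j - a) mod int m)"
  have s: "int s = (j - a) mod int m" using m by (simp add: s_def)
  have "\<eta> j = \<eta> (a + int s)"
    using per by (rule is_period_cong) (simp add: s mod_simps)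
  also have "\<dots> = \<eta> (b + int s)" by (rule agree)
  also have "\<dots> = \<eta> (j + (b - a) mod int m)"
  proof (rule is_period_cong[OF per])
    have "b + (j - a) = j + (b - a)" by simp
    then show "(b + int s) mod int m = (j + (b - a) mod int m) mod int m"
      by (metis s mod_add_right_eq)
  qed
  also have "\<dots> = \<eta> (j + int (nat ((b - a) mod int m)))"
    using m by simp
  finally show "\<eta> (j + int (nat ((b - a) mod int m))) = \<eta> j" ..
qed

definition unique_right_extensions :: "(int \<Rightarrow> 'a) \<Rightarrow> nat \<Rightarrow> bool" where
  "unique_right_extensions \<eta> n \<longleftrightarrow>
     (\<forall>i i'. subword \<eta> i n = subword \<eta> i' n \<longrightarrow> \<eta> (i + int n) = \<eta> (i' + int n))"

definition words_determine_phase :: "(int \<Rightarrow> 'a) \<Rightarrow> nat \<Rightarrow> nat \<Rightarrow> bool" where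
  "words_determine_phase \<eta> m n \<longleftrightarrow>
     (\<forall>i i'. subword \<eta> i n = subword \<eta> i' n \<longrightarrow> i mod int m = i' mod int m)"

lemma words_determine_phase_mono:
  "words_determine_phase \<eta> m n \<Longrightarrow> n \<le> n' \<Longrightarrow> words_determine_phase \<eta> m n'"
  unfolding words_determine_phase_def by (metis take_subword)

lemma unique_right_extensions_agree:
  assumes ext: "unique_right_extensions \<eta> n" and eq: "subword \<eta> i n = subword \<eta> i' n"
  shows "\<eta> (i + int n + int s) = \<eta> (i' + int n + int s)"
proof -
  have "subword \<eta> (i + int t) n = subword \<eta> (i' + int t) n" for t
  proof (induction t)
    case (Suc t)
    then have "subword \<eta> (i + int t) (Suc n) = subword \<eta> (i' + int t) (Suc n)"
      using ext unfolding unique_right_extensions_def subword_Suc by metis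
    then have "tl (subword \<eta> (i + int t) (Suc n)) = tl (subword \<eta> (i' + int t) (Suc n))"
      by simp
    then show ?case by (simp add: tl_subword algebra_simps)
  qed (simp add: eq)
  with ext show ?thesis
    unfolding unique_right_extensions_def by (metis add.commute add.left_commute)
qed

lemma unique_right_extensions_determine_phase:
  assumes hp: "has_period \<eta> m" and ext: "unique_right_extensions \<eta> n"
  shows "words_determine_phase \<eta> m n"
  unfolding words_determine_phase_def
proof (intro allI impI)
  fix i i' assume "subword \<eta> i n = subword \<eta> i' n"
  then have "\<eta> ((i + int n) + int s) = \<eta> ((i' + int n) + int s)" for s
    using unique_right_extensions_agree[OF ext] by blast
  moreover have per: "is_period \<eta> m" "m \<ge> 1"
    using hp by (simp_all add: has_period_iff_is_period)
  ultimately have "is_period \<eta> (nat ((i' - i) mod int m))"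
    using is_period_of_agreement[of \<eta> m "i + int n" "i' + int n"] by simp
  moreover have "nat ((i' - i) mod int m) < m"
    using per(2) by (simp add: nat_less_iff)
  ultimately have "nat ((i' - i) mod int m) = 0"
    using hp unfolding has_period_iff_is_period by (metis less_one not_less)
  then have "(i' - i) mod int m = 0"
    using per(2) by (simp add: nat_eq_iff)
  then show "i mod int m = i' mod int m"
    by (metis mod_eq_0_iff_dvd mod_eq_dvd_iff)
qed

definition phase_words :: "(int \<Rightarrow> 'a) \<Rightarrow> nat \<Rightarrow> nat \<Rightarrow> 'a list set" where
  "phase_words \<eta> m n = (\<lambda>i. subword \<eta> (int i) n) ` {0..<m}"

lemma subword_in_phase_words:
  assumes "is_period \<eta> m" "m \<ge> 1"
  shows "subword \<eta> i n \<in> phase_words \<eta> m n"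
proof -
  have "subword \<eta> i n = subword \<eta> (int (nat (i mod int m))) n"
    using assms(2) by (intro subword_cong[OF assms(1)]) simp
  moreover have "nat (i mod int m) \<in> {0..<m}"
    using assms(2) by (simp add: nat_less_iff)
  ultimately show ?thesis
    unfolding phase_words_def by blast
qed

lemma card_phase_words_less:
  assumes per: "is_period \<eta> m" and m: "m \<ge> 1" and ext: "\<not> unique_right_extensions \<eta> n"
  shows "card (phase_words \<eta> m n) < card (phase_words \<eta> m (Suc n))"
proof -
  obtain i i' where eq: "subword \<eta> i n = subword \<eta> i' n" and ne: "\<eta> (i + int n) \<noteq> \<eta> (i' + int n)"
    using ext unfolding unique_right_extensions_def by blast
  have "\<not> inj_on (take n) (phase_words \<eta> m (Suc n))"
  proof
    assume "inj_on (take n) (phase_words \<eta> m (Suc n))"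
    moreover have "take n (subword \<eta> i (Suc n)) = take n (subword \<eta> i' (Suc n))"
      using eq by (simp add: take_subword)
    ultimately have "subword \<eta> i (Suc n) = subword \<eta> i' (Suc n)"
      using subword_in_phase_words[OF per m] by (blast dest: inj_onD)
    with ne show False by (simp add: subword_Suc)
  qed
  moreover have "take n ` phase_words \<eta> m (Suc n) = phase_words \<eta> m n"
    by (simp add: phase_words_def image_image take_subword)
  moreover have "finite (phase_words \<eta> m (Suc n))"
    by (simp add: phase_words_def)
  ultimately show ?thesis
    by (metis card_image_le inj_on_iff_eq_card order_le_neq_trans)
qed

lemma has_period_determines_phase:
  assumes hp: "has_period \<eta> m"
  shows "words_determine_phase \<eta> m (m - 1)"
proof (rule ccontr)
  assume not_det: "\<not> words_determine_phase \<eta> m (m - 1)"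
  have per: "is_period \<eta> m" "m \<ge> 1"
    using hp by (simp_all add: has_period_iff_is_period)
  have "\<not> unique_right_extensions \<eta> n" if "n \<le> m - 1" for n
    using not_det that unique_right_extensions_determine_phase[OF hp] words_determine_phase_mono
    by blast
  then have card_ge: "card (phase_words \<eta> m n) \<ge> n + 1" if "n \<le> m" for n
    using that
  proof (induction n)
    case 0
    have "phase_words \<eta> m 0 = {[]}"
      using per(2) by (auto simp: phase_words_def subword_def intro!: image_eqI[of _ _ 0])
    then show ?case by simp
  next
    case (Suc n)
    then show ?case
      using card_phase_words_less[OF per, of n] by simp
  qed
  have "card (phase_words \<eta> m m) \<le> m"
    unfolding phase_words_def by (metis card_atLeastLessThan card_image_le diff_zero finite_atLeastLessThan)
  with card_ge[of m] show False by simp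
qed

lemma orbit_gap_edge:
  assumes "e \<in> gap_edges (orbit \<eta>) k"
  shows "\<exists>i. e = subword \<eta> i (Suc k)"
  using assms unfolding gap_edges_def language_def orbit_def by (auto simp: subword_translate)

lemma orbit_not_branching:
  assumes hp: "has_period \<eta> m" and k: "m \<le> k + 1"
  shows "\<not> branching (orbit \<eta>) k v"
proof -
  have per: "is_period \<eta> m"
    using hp by (simp add: has_period_iff_is_period)
  have det: "words_determine_phase \<eta> m k"
    using words_determine_phase_mono[OF has_period_determines_phase[OF hp]] k by simp
  have edge_eq: "e = e'" if edges: "e \<in> gap_edges (orbit \<eta>) k" "e' \<in> gap_edges (orbit \<eta>) k"
    and adjacent: "src e = src e' \<or> tgt e = tgt e'" for e e'
  proof -
    obtain i i' where e: "e = subword \<eta> i (Suc k)" "e' = subword \<eta> i' (Suc k)"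
      using edges orbit_gap_edge by metis
    from adjacent consider
        (src) "subword \<eta> i k = subword \<eta> i' k"
      | (tgt) "subword \<eta> (i + 1) k = subword \<eta> (i' + 1) k"
      by (auto simp: e src_def tgt_def butlast_subword tl_subword)
    then have "i mod int m = i' mod int m"
    proof cases
      case src
      then show ?thesis using det unfolding words_determine_phase_def by blast
    next
      case tgt
      then have "(i + 1) mod int m = (i' + 1) mod int m"
        using det unfolding words_determine_phase_def by blast
      then show ?thesis using mod_diff_cong[of "i + 1" "int m" "i' + 1" 1 1] by simp
    qed
    then show ?thesis
      using e subword_cong[OF per] by metis
  qed
  have card_le_1: "card A \<le> 1" if "\<And>e e'. e \<in> A \<Longrightarrow> e' \<in> A \<Longrightarrow> e = e'" for A :: "'a list set"
    using that by (cases "finite A") (auto simp: card_le_Suc0_iff_eq)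
  have "card (in_edges (orbit \<eta>) k v) \<le> 1"
    using edge_eq by (intro card_le_1) (auto simp: in_edges_def)
  moreover have "card (out_edges (orbit \<eta>) k v) \<le> 1"
    using edge_eq by (intro card_le_1) (auto simp: out_edges_def)
  ultimately show ?thesis
    by (simp add: branching_def degree_def)
qed

theorem proposition8:
  fixes \<Xi> :: "(int \<Rightarrow> 'a::finite) set"
  assumes "subshift \<Xi>"
  shows "((\<forall>\<eta>\<in>\<Xi>. \<not> periodic \<eta>) \<longrightarrow>
            (\<forall>m. \<exists>k0. \<forall>k\<ge>k0. \<not> (\<exists>es. closed_path \<Xi> k es \<and> length es \<le> m)) \<and>
            (\<exists>k0. \<forall>k\<ge>k0. gap_simple \<Xi> k))
       \<and> (\<forall>\<eta> m. \<eta> \<in> \<Xi> \<and> has_period \<eta> m \<longrightarrow>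
            (\<forall>k. \<exists>es. closed_path \<Xi> k es \<and> length es = m))
       \<and> (\<forall>\<eta> m. \<Xi> = orbit \<eta> \<and> has_period \<eta> m \<longrightarrow>
            (\<forall>k. k + 1 \<ge> m \<longrightarrow> (\<forall>v. \<not> branching \<Xi> k v)))"
proof (intro conjI impI allI)
  assume aperiodic: "\<forall>\<eta>\<in>\<Xi>. \<not> periodic \<eta>"
  show "\<exists>k0. \<forall>k\<ge>k0. \<not> (\<exists>es. closed_path \<Xi> k es \<and> length es \<le> m)" for m
    using eventually_no_short_closed_paths[OF assms aperiodic] .
  obtain k0 where no_loops: "\<forall>k\<ge>k0. \<not> (\<exists>es. closed_path \<Xi> k es \<and> length es \<le> 1)"
    using eventually_no_short_closed_paths[OF assms aperiodic] by blast
  have "gap_simple \<Xi> k" if "k \<ge> max k0 1" for k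
    using that no_loops by (intro gap_simple_if_no_loops) auto
  then show "\<exists>k0. \<forall>k\<ge>k0. gap_simple \<Xi> k"
    by blast
next
  fix \<eta> m k
  assume "\<eta> \<in> \<Xi> \<and> has_period \<eta> m"
  then show "\<exists>es. closed_path \<Xi> k es \<and> length es = m"
    by (auto simp: has_period_iff_is_period intro: closed_path_of_period)
next
  fix \<eta> m k v
  assume "\<Xi> = orbit \<eta> \<and> has_period \<eta> m" "m \<le> k + 1"
  then show "\<not> branching \<Xi> k v"
    using orbit_not_branching by blast
qed

end
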